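(* Let $\Delta$ be a simplicial polytopal fan in $\mathbb{R}^d$ with ray generators $\mathbf{v}_1,\ldots,\mathbf{v}_n$ and maximal cones (facets) $F_1,\ldots,F_r$. Then the ray-facet incidence graph $G_\Delta$ has a matching of size $n$.
   Context: A fan is simplicial if every cone is generated by linearly independent vectors; polytopal if it is the normal fan of a polytope (so it is complete and full-dimensional). The ray-facet incidence graph $G_\Delta$ is the bipartite graph on $[n]\sqcup[r]$ in which $i\in[n]$ and $j\in[r]$ are adjacent iff $\mathbf{v}_i$ is a generator of $F_j$. *)

theory Defs
  imports "HOL-Analysis.Analysis"
begin

definition normal_cone :: "(real^'d) set \<Rightarrow> (real^'d) set \<Rightarrow> (real^'d) set" where
  "normal_cone P G = {c. \<forall>x\<in>G. \<forall>y\<in>P. c \<bullet> y \<le> c \<bullet> x}"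

definition normal_fan :: "(real^'d) set \<Rightarrow> (real^'d) set set" where
  "normal_fan P = {normal_cone P G | G. G face_of P \<and> G \<noteq> {}}"

definition simplicial_fan :: "(real^'d) set set \<Rightarrow> bool" where
  "simplicial_fan \<Delta> \<longleftrightarrow> (\<forall>C\<in>\<Delta>. \<exists>S. independent S \<and> C = convex_cone hull S)"

definition polytopal_fan :: "(real^'d) set set \<Rightarrow> bool" where
  "polytopal_fan \<Delta> \<longleftrightarrow> (\<exists>P. polytope P \<and> interior P \<noteq> {} \<and> \<Delta> = normal_fan P)"

definition rays_of :: "(real^'d) set set \<Rightarrow> (real^'d) set set" where
  "rays_of \<Delta> = {C \<in> \<Delta>. aff_dim C = 1}"

definition maximal_cones :: "(real^'d) set set \<Rightarrow> (real^'d) set set" where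
  "maximal_cones \<Delta> = {C \<in> \<Delta>. \<not> (\<exists>C'\<in>\<Delta>. C \<subset> C')}"

definition ray_generators :: "(real^'d) set set \<Rightarrow> nat \<Rightarrow> (nat \<Rightarrow> real^'d) \<Rightarrow> bool" where
  "ray_generators \<Delta> n v \<longleftrightarrow> (\<forall>i<n. v i \<noteq> 0) \<and>
     bij_betw (\<lambda>i. cone hull {v i}) {..<n} (rays_of \<Delta>)"

definition facet_enum :: "(real^'d) set set \<Rightarrow> nat \<Rightarrow> (nat \<Rightarrow> (real^'d) set) \<Rightarrow> bool" where
  "facet_enum \<Delta> r F \<longleftrightarrow> bij_betw F {..<r} (maximal_cones \<Delta>)"

text \<open>Ray-facet incidence graph: bipartite on [n] \<sqcup> [r]; edge (i,j) iff v_i is a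
  generator of F_j (i.e. v_i lies in F_j; in a simplicial fan this means the ray of v_i
  is one of the extreme rays of F_j).\<close>
definition incidence_edges :: "nat \<Rightarrow> nat \<Rightarrow> (nat \<Rightarrow> real^'d) \<Rightarrow> (nat \<Rightarrow> (real^'d) set) \<Rightarrow> (nat \<times> nat) set" where
  "incidence_edges n r v F = {(i, j). i < n \<and> j < r \<and> v i \<in> F j}"

definition bipartite_matching :: "(nat \<times> nat) set \<Rightarrow> (nat \<times> nat) set \<Rightarrow> bool" where
  "bipartite_matching E M \<longleftrightarrow> M \<subseteq> E \<and>
     (\<forall>e\<in>M. \<forall>e'\<in>M. e \<noteq> e' \<longrightarrow> fst e \<noteq> fst e' \<and> snd e \<noteq> snd e')"

end

theory Submission
  imports Defs
begin

(* Realise the fan as the normal fan of a full-dimensional polytope P. The face of P on which a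
   ray generator v_i is maximised is a facet, so it has at least d vertices. Conversely, the
   normal cone of a vertex x is a maximal cone, spanned by at most d independent vectors, and
   every v_i whose facet contains x is a positive multiple of one of them; so x lies on at most
   d of these facets. Hall's theorem for such degree bounds matches the rays injectively to
   vertices of their facets, and v_i then lies in the maximal cone N(P, x) of its vertex x. *)

section \<open>Systems of distinct representatives\<close>

definition hall_condition :: "'a set \<Rightarrow> ('a \<Rightarrow> 'b set) \<Rightarrow> bool" where
  "hall_condition I A \<longleftrightarrow> (\<forall>J\<subseteq>I. card J \<le> card (\<Union>(A ` J)))"

definition distinct_representatives :: "('a \<Rightarrow> 'b) \<Rightarrow> 'a set \<Rightarrow> ('a \<Rightarrow> 'b set) \<Rightarrow> bool" where
  "distinct_representatives f I A \<longleftrightarrow> inj_on f I \<and> (\<forall>i\<in>I. f i \<in> A i)"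

lemma hall_condition_subset: "hall_condition I A \<Longrightarrow> J \<subseteq> I \<Longrightarrow> hall_condition J A"
  unfolding hall_condition_def by blast

lemma distinct_representatives_glue:
  assumes "J \<subseteq> I" and f: "distinct_representatives f J A" "f ` J \<subseteq> U"
    and g: "distinct_representatives g (I - J) (\<lambda>i. A i - U)"
  shows "distinct_representatives (\<lambda>i. if i \<in> J then f i else g i) I A"
proof -
  let ?h = "\<lambda>i. if i \<in> J then f i else g i"
  have "inj_on ?h J" "inj_on ?h (I - J)"
    using f(1) g by (auto simp: distinct_representatives_def inj_on_def)
  moreover have "?h ` J \<subseteq> U" "?h ` (I - J) \<inter> U = {}"
    using f(2) g by (auto simp: distinct_representatives_def)
  ultimately have "inj_on ?h (J \<union> (I - J))"
    by (subst inj_on_Un) blast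
  moreover have "J \<union> (I - J) = I"
    using assms(1) by blast
  ultimately show ?thesis
    using f(1) g by (auto simp: distinct_representatives_def)
qed

lemma hall_condition_Diff_tight:
  assumes hall: "hall_condition I A" and fin: "finite I" "\<forall>i\<in>I. finite (A i)"
    and J: "J \<subseteq> I" "card (\<Union>(A ` J)) = card J"
  shows "hall_condition (I - J) (\<lambda>i. A i - \<Union>(A ` J))"
  unfolding hall_condition_def
proof (intro allI impI)
  fix K assume K: "K \<subseteq> I - J"
  have finite_Union: "finite (\<Union>(A ` L))" if "L \<subseteq> I" for L
    using that fin by (intro finite_UN_I) (auto intro: finite_subset)
  have "card (\<Union>(A ` (K \<union> J)) - \<Union>(A ` J)) = card (\<Union>(A ` (K \<union> J))) - card J"
    using J K finite_Union by (subst card_Diff_subset) auto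
  moreover have "K \<union> J \<subseteq> I"
    using K J by blast
  with hall have "card (K \<union> J) \<le> card (\<Union>(A ` (K \<union> J)))"
    unfolding hall_condition_def by blast
  moreover have "card (K \<union> J) = card K + card J"
    using K J fin by (intro card_Un_disjoint) (auto intro: finite_subset)
  ultimately have "card K \<le> card (\<Union>(A ` (K \<union> J)) - \<Union>(A ` J))"
    by linarith
  also have "\<Union>(A ` (K \<union> J)) - \<Union>(A ` J) = (\<Union>i\<in>K. A i - \<Union>(A ` J))"
    by blast
  finally show "card K \<le> card (\<Union>i\<in>K. A i - \<Union>(A ` J))" .
qed

lemma hall_condition_remove_point:
  assumes hall: "hall_condition I A" and fin: "finite I" "\<forall>i\<in>I. finite (A i)"
    and no_tight: "\<nexists>J. J \<noteq> {} \<and> J \<subset> I \<and> card (\<Union>(A ` J)) = card J"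
    and "i \<in> I"
  obtains y where "y \<in> A i" "hall_condition (I - {i}) (\<lambda>j. A j - {y})"
proof -
  have "card {i} \<le> card (\<Union>(A ` {i}))"
    using hall \<open>i \<in> I\<close> unfolding hall_condition_def by blast
  then obtain y where "y \<in> A i"
    by fastforce
  have "hall_condition (I - {i}) (\<lambda>j. A j - {y})"
    unfolding hall_condition_def
  proof (intro allI impI)
    fix K assume K: "K \<subseteq> I - {i}"
    show "card K \<le> card (\<Union>j\<in>K. A j - {y})"
    proof (cases "K = {}")
      case False
      have "K \<subset> I"
        using K \<open>i \<in> I\<close> by blast
      then have "card K \<le> card (\<Union>(A ` K))" "card (\<Union>(A ` K)) \<noteq> card K"
        using hall no_tight False unfolding hall_condition_def by blast+
      moreover have "finite (\<Union>(A ` K))"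
        using \<open>K \<subset> I\<close> fin by (intro finite_UN_I) (auto intro: finite_subset)
      moreover have "(\<Union>j\<in>K. A j - {y}) = \<Union>(A ` K) - {y}"
        by blast
      ultimately show ?thesis
        by (simp add: card_Diff_singleton_if) linarith
    qed simp
  qed
  with \<open>y \<in> A i\<close> show ?thesis ..
qed

theorem hall_marriage:
  assumes "finite I" "\<forall>i\<in>I. finite (A i)" "hall_condition I A"
  shows "\<exists>f. distinct_representatives f I A"
  using assms
proof (induction "card I" arbitrary: I A rule: less_induct)
  case less
  note fin = less.prems(1,2) and hall = less.prems(3)
  have IH: "\<exists>f. distinct_representatives f K B"
    if "K \<subset> I" "\<forall>i\<in>K. finite (B i)" "hall_condition K B" for K and B :: "'a \<Rightarrow> 'b set"
  proof -
    have "finite K" "card K < card I"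
      using that(1) fin(1) by (auto intro: finite_subset psubset_card_mono)
    then show ?thesis
      using less.hyps[of K B] that(2,3) by blast
  qed
  show ?case
  proof (cases "\<exists>J. J \<noteq> {} \<and> J \<subset> I \<and> card (\<Union>(A ` J)) = card J")
    case True
    then obtain J where J: "J \<noteq> {}" "J \<subset> I" "card (\<Union>(A ` J)) = card J"
      by blast
    let ?U = "\<Union>(A ` J)"
    obtain f where f: "distinct_representatives f J A"
      using IH[of J A] J(2) fin(2) hall_condition_subset[OF hall] by blast
    moreover obtain g where "distinct_representatives g (I - J) (\<lambda>i. A i - ?U)"
      using IH[of "I - J" "\<lambda>i. A i - ?U"] J fin(2) hall_condition_Diff_tight[OF hall fin] by blast
    moreover have "f ` J \<subseteq> ?U"
      using f by (auto simp: distinct_representatives_def)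
    ultimately show ?thesis
      using distinct_representatives_glue J(2) by blast
  next
    case no_tight: False
    show ?thesis
    proof (cases "I = {}")
      case False
      then obtain i where "i \<in> I"
        by blast
      with hall fin no_tight obtain y
        where "y \<in> A i" "hall_condition (I - {i}) (\<lambda>j. A j - {y})"
        by (rule hall_condition_remove_point)
      moreover obtain g where "distinct_representatives g (I - {i}) (\<lambda>j. A j - {y})"
        using IH[of "I - {i}" "\<lambda>j. A j - {y}"] \<open>i \<in> I\<close> fin(2) calculation(2) by blast
      ultimately show ?thesis
        using distinct_representatives_glue[of "{i}" I "\<lambda>_. y" A "{y}" g] \<open>i \<in> I\<close>
        by (auto simp: distinct_representatives_def)
    qed (simp add: distinct_representatives_def)
  qed
qed

lemma hall_condition_degree_bounds:
  assumes fin: "finite I" "\<forall>i\<in>I. finite (A i)" and "d > 0"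
    and left_degree: "\<forall>i\<in>I. d \<le> card (A i)"
    and right_degree: "\<forall>x. card {i\<in>I. x \<in> A i} \<le> d"
  shows "hall_condition I A"
  unfolding hall_condition_def
proof (intro allI impI)
  fix J assume J: "J \<subseteq> I"
  define U where "U = \<Union>(A ` J)"
  have "finite J" "finite U"
    using J fin by (auto simp: U_def intro: finite_subset)
  have "d * card J \<le> (\<Sum>i\<in>J. card (A i))"
    using sum_bounded_below[of J d "\<lambda>i. card (A i)"] left_degree J by (auto simp: mult.commute)
  also have "\<dots> = card (SIGMA i:J. A i)"
    using \<open>finite J\<close> fin J by (subst card_SigmaI) auto
  also have "(SIGMA i:J. A i) = prod.swap ` (SIGMA x:U. {i\<in>J. x \<in> A i})"
    unfolding U_def by auto
  also have "card \<dots> = (\<Sum>x\<in>U. card {i\<in>J. x \<in> A i})"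
    using \<open>finite J\<close> \<open>finite U\<close> by (subst card_image) (auto simp: card_SigmaI)
  also have "\<dots> \<le> d * card U"
  proof -
    have "card {i\<in>J. x \<in> A i} \<le> card {i\<in>I. x \<in> A i}" for x
      using J fin(1) by (intro card_mono) auto
    then have "card {i\<in>J. x \<in> A i} \<le> d" for x
      using right_degree le_trans by blast
    then show ?thesis
      using sum_bounded_above[of U "\<lambda>x. card {i\<in>J. x \<in> A i}" d] by (simp add: mult.commute)
  qed
  finally show "card J \<le> card (\<Union>(A ` J))"
    using \<open>d > 0\<close> unfolding U_def by simp
qed

lemma bipartite_matching_graph_of_inj:
  assumes "inj_on g I" "\<forall>i\<in>I. (i, g i) \<in> E"
  shows "bipartite_matching E ((\<lambda>i. (i, g i)) ` I)" "card ((\<lambda>i. (i, g i)) ` I) = card I"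
  using assms by (auto simp: bipartite_matching_def inj_on_def card_image)

section \<open>Faces of polytopes and their normal cones\<close>

lemma cone_hull_singleton_eq:
  assumes "s \<in> cone hull {v}" "s \<noteq> 0"
  shows "cone hull {s} = cone hull {v}"
proof -
  obtain t where "t > 0" "s = t *\<^sub>R v"
    using assms by (auto simp: cone_hull_expl)
  then have "v = inverse t *\<^sub>R s"
    by simp
  then have "v \<in> cone hull {s}"
    using \<open>t > 0\<close>
    by (metis cone_cone_hull cone_def hull_inc insertI1 less_imp_le positive_imp_inverse_positive)
  then show ?thesis
    using assms(1) by (meson cone_cone_hull hull_minimal insert_subset subset_antisym empty_subsetI)
qed

lemma convex_cone_hull_finite_nonneg_combination:
  assumes "finite S" "v \<in> convex_cone hull S"
  obtains u where "\<forall>s\<in>S. 0 \<le> u s" "v = (\<Sum>s\<in>S. u s *\<^sub>R s)"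
proof (cases "S = {}")
  case True
  then show ?thesis
    using assms(2) that[of "\<lambda>_. 0"] by simp
next
  case False
  then obtain z c where "z \<in> convex hull S" "c \<ge> 0" "v = c *\<^sub>R z"
    using assms(2) by (auto simp: convex_cone_hull_convex_hull_nonempty)
  moreover obtain w where "\<forall>s\<in>S. 0 \<le> w s" "z = (\<Sum>s\<in>S. w s *\<^sub>R s)"
    using \<open>z \<in> convex hull S\<close> assms(1) by (auto simp: convex_hull_finite)
  ultimately show ?thesis
    using that[of "\<lambda>s. c * w s"] by (simp add: scaleR_sum_right)
qed

definition max_face :: "'a::real_inner set \<Rightarrow> 'a \<Rightarrow> 'a set" where
  "max_face P c = {x\<in>P. \<forall>y\<in>P. c \<bullet> y \<le> c \<bullet> x}"

lemma max_face_subset: "max_face P c \<subseteq> P"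
  by (auto simp: max_face_def)

lemma max_face_scaleR: "t > 0 \<Longrightarrow> max_face P (t *\<^sub>R c) = max_face P c"
  by (simp add: max_face_def)

lemma max_face_face_of:
  assumes "convex P" shows "max_face P c face_of P"
proof (cases "max_face P c = {}")
  case False
  then obtain g where g: "g \<in> max_face P c" by blast
  then have "max_face P c = P \<inter> {x. c \<bullet> x = c \<bullet> g}"
    by (auto simp: max_face_def intro: order_antisym)
  also have "\<dots> face_of P"
    using g assms by (intro face_of_Int_supporting_hyperplane_le) (auto simp: max_face_def)
  finally show ?thesis .
qed simp

lemma max_face_neq_self:
  fixes P :: "'a::real_inner set"
  assumes "interior P \<noteq> {}" "c \<noteq> 0"
  shows "max_face P c \<noteq> P"
proof -
  obtain p where "p \<in> interior P"
    using assms(1) by blast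
  then obtain e where "e > 0" "ball p e \<subseteq> P"
    using mem_interior by blast
  have "p \<in> P"
    using \<open>p \<in> interior P\<close> interior_subset by blast
  define q where "q = p + (e / 2 / norm c) *\<^sub>R c"
  have "q \<in> P"
    using \<open>e > 0\<close> \<open>ball p e \<subseteq> P\<close> assms(2) by (auto simp: q_def dist_norm)
  moreover have "c \<bullet> p < c \<bullet> q"
    using \<open>e > 0\<close> assms(2) by (simp add: q_def inner_add_right)
  ultimately have "p \<notin> max_face P c"
    by (auto simp: max_face_def not_le)
  then show ?thesis
    using \<open>p \<in> P\<close> by blast
qed

lemma mem_normal_cone_iff_subset_max_face:
  "G \<subseteq> P \<Longrightarrow> c \<in> normal_cone P G \<longleftrightarrow> G \<subseteq> max_face P c"
  by (auto simp: normal_cone_def max_face_def)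

lemma normal_cone_antimono: "G \<subseteq> G' \<Longrightarrow> normal_cone P G' \<subseteq> normal_cone P G"
  by (auto simp: normal_cone_def)

lemma ray_max_face:
  assumes "cone hull {v} = normal_cone P G" "G \<subseteq> P"
  shows "G \<subseteq> max_face P v" "normal_cone P (max_face P v) \<subseteq> cone hull {v}"
proof -
  show "G \<subseteq> max_face P v"
    using assms hull_inc[of v "{v}" cone] by (simp add: mem_normal_cone_iff_subset_max_face)
  then show "normal_cone P (max_face P v) \<subseteq> cone hull {v}"
    unfolding assms(1) by (rule normal_cone_antimono)
qed

lemma max_face_facet_of:
  fixes P :: "(real^'d) set"
  assumes P: "polytope P" "interior P \<noteq> {}" and "v \<noteq> 0" "max_face P v \<noteq> {}"
    and normal: "normal_cone P (max_face P v) \<subseteq> cone hull {v}"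
  shows "max_face P v facet_of P"
proof -
  have poly: "polyhedron P"
    using P(1) by (rule polytope_imp_polyhedron)
  have "max_face P v face_of P" "max_face P v \<noteq> P"
    using P assms(3) by (simp_all add: max_face_face_of polytope_imp_convex max_face_neq_self)
  then obtain F where F: "F facet_of P" "max_face P v \<subseteq> F"
    using face_of_polyhedron_subset_facet[OF poly] assms(4) by blast
  then have "F exposed_face_of P" "F \<noteq> {}" "F \<noteq> P"
    using exposed_face_of_polyhedron[OF poly] by (auto simp: facet_of_def facet_of_irrefl)
  then obtain a b where ab: "a \<noteq> 0" "P \<subseteq> {x. a \<bullet> x \<le> b}" "F = P \<inter> {x. a \<bullet> x = b}"
    unfolding exposed_face_of by blast
  then have "F \<subseteq> max_face P a"
    by (auto simp: max_face_def)
  then have "a \<in> normal_cone P (max_face P v)"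
    using F(2) by (simp add: mem_normal_cone_iff_subset_max_face max_face_subset)
  then obtain t where "t > 0" "a = t *\<^sub>R v"
    using normal ab(1) by (auto simp: cone_hull_expl)
  then have "F = max_face P v"
    using F(2) \<open>F \<subseteq> max_face P a\<close> by (simp add: max_face_scaleR)
  with F(1) show ?thesis
    by simp
qed

lemma card_extreme_points_facet:
  fixes P :: "'a::euclidean_space set"
  assumes "polytope P" "interior P \<noteq> {}" "F facet_of P"
  shows "DIM('a) \<le> card {x. x extreme_point_of P \<and> x \<in> F}"
proof -
  define E where "E = {x. x extreme_point_of F}"
  have "F face_of P"
    using assms(3) by (rule facet_of_imp_face_of)
  with assms(1) have "polytope F"
    by (rule face_of_polytope_polytope)
  then have "F = convex hull E" "finite E"
    unfolding E_def
    by (simp_all add: Krein_Milman_Minkowski polytope_imp_compact polytope_imp_convex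
        finite_polyhedron_extreme_points polytope_imp_polyhedron)
  then have "aff_dim F \<le> int (card E) - 1"
    using aff_dim_le_card[of E] by (metis aff_dim_convex_hull)
  moreover have "aff_dim F = int DIM('a) - 1"
    using assms(2,3) by (simp add: facet_of_def aff_dim_nonempty_interior)
  moreover have "E = {x. x extreme_point_of P \<and> x \<in> F}"
    using \<open>F face_of P\<close> by (simp add: E_def extreme_point_of_face)
  ultimately show ?thesis
    by simp
qed

lemma extreme_point_max_face:
  fixes P :: "'a::euclidean_space set"
  assumes "polytope P" "x extreme_point_of P"
  obtains c where "max_face P c = {x}"
proof -
  have "{x} exposed_face_of P"
    using assms by (simp add: exposed_face_of_polyhedron polytope_imp_polyhedron face_of_singleton)
  then obtain c b where cb: "P \<subseteq> {y. c \<bullet> y \<le> b}" "{x} = P \<inter> {y. c \<bullet> y = b}"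
    unfolding exposed_face_of_def by blast
  then have "x \<in> P" "c \<bullet> x = b"
    by blast+
  have "max_face P c \<subseteq> P \<inter> {y. c \<bullet> y = b}"
    using cb(1) \<open>x \<in> P\<close> \<open>c \<bullet> x = b\<close> by (force simp: max_face_def)
  then have "max_face P c = {x}"
    using cb \<open>x \<in> P\<close> \<open>c \<bullet> x = b\<close> by (auto simp: max_face_def)
  then show ?thesis ..
qed

lemma normal_cone_extreme_point_maximal:
  fixes P :: "(real^'d) set"
  assumes "polytope P" "x extreme_point_of P"
    and "normal_cone P {x} \<subseteq> normal_cone P G" "G \<subseteq> P" "G \<noteq> {}"
  shows "G = {x}"
proof -
  obtain c where c: "max_face P c = {x}"
    using assms(1,2) by (rule extreme_point_max_face)
  then have "c \<in> normal_cone P G"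
    using assms(3) max_face_subset[of P c] by (auto simp: mem_normal_cone_iff_subset_max_face)
  then show "G = {x}"
    using assms(4,5) c by (auto simp: mem_normal_cone_iff_subset_max_face)
qed

lemma normal_cone_extreme_point_in_maximal_cones:
  fixes P :: "(real^'d) set"
  assumes "polytope P" "x extreme_point_of P"
  shows "normal_cone P {x} \<in> maximal_cones (normal_fan P)"
proof -
  have "\<not> normal_cone P {x} \<subset> normal_cone P G" if "G face_of P" "G \<noteq> {}" for G
    using normal_cone_extreme_point_maximal[OF assms _ face_of_imp_subset[OF that(1)] that(2)]
    by blast
  then show ?thesis
    using assms(2) by (auto simp: maximal_cones_def normal_fan_def face_of_singleton)
qed

lemma inj_on_normal_cone_extreme_points:
  fixes P :: "(real^'d) set"
  assumes "polytope P"
  shows "inj_on (\<lambda>x. normal_cone P {x}) {x. x extreme_point_of P}"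
  using normal_cone_extreme_point_maximal[OF assms]
  by (intro inj_onI) (auto simp: extreme_point_of_def)

lemma generator_in_normal_cone_max_face:
  fixes P :: "(real^'d) set"
  assumes "finite S" "S \<subseteq> normal_cone P {x}" "x \<in> max_face P v"
    and "v \<in> convex_cone hull S" "v \<noteq> 0"
  shows "\<exists>s\<in>S. s \<in> normal_cone P (max_face P v)"
proof -
  obtain u where u: "\<forall>s\<in>S. 0 \<le> u s" "v = (\<Sum>s\<in>S. u s *\<^sub>R s)"
    using assms(1,4) by (rule convex_cone_hull_finite_nonneg_combination)
  obtain s0 where "s0 \<in> S" "u s0 \<noteq> 0"
    using u(2) assms(5) by (metis (no_types, lifting) scale_zero_left sum.neutral)
  then have "u s0 > 0"
    using u(1) by (simp add: order_less_le)
  \<comment> \<open>The functional c \<mapsto> c \<bullet> (x - y) is nonnegative on the normal cone of x and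
    vanishes at v, hence on every generator with positive weight in v.\<close>
  have "s0 \<bullet> y = s0 \<bullet> x" if y: "y \<in> max_face P v" for y
  proof -
    have nonneg: "0 \<le> u s * (s \<bullet> (x - y))" if "s \<in> S" for s
    proof -
      have "s \<bullet> y \<le> s \<bullet> x"
        using assms(2) that y by (auto simp: normal_cone_def max_face_def)
      then show ?thesis
        using u(1) that by (simp add: inner_diff_right)
    qed
    have "v \<bullet> y \<le> v \<bullet> x" "v \<bullet> x \<le> v \<bullet> y"
      using assms(3) y by (auto simp: max_face_def)
    moreover have "(\<Sum>s\<in>S. u s * (s \<bullet> (x - y))) = v \<bullet> (x - y)"
      by (simp add: u(2) inner_sum_left)
    ultimately have "(\<Sum>s\<in>S. u s * (s \<bullet> (x - y))) = 0"
      by (simp add: inner_diff_right)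
    then have "u s0 * (s0 \<bullet> (x - y)) = 0"
      using sum_nonneg_eq_0_iff[OF assms(1), of "\<lambda>s. u s * (s \<bullet> (x - y))"] nonneg \<open>s0 \<in> S\<close>
      by blast
    then show ?thesis
      using \<open>u s0 > 0\<close> by (simp add: inner_diff_right)
  qed
  moreover have "s0 \<in> normal_cone P {x}"
    using \<open>s0 \<in> S\<close> assms(2) by blast
  ultimately have "s0 \<in> normal_cone P (max_face P v)"
    by (simp add: normal_cone_def)
  then show ?thesis
    using \<open>s0 \<in> S\<close> by blast
qed

lemma card_rays_through_simplicial_vertex:
  fixes P :: "(real^'d) set"
  assumes S: "independent S" "normal_cone P {x} = convex_cone hull S" and "x \<in> P"
    and rays: "\<forall>i\<in>I. v i \<noteq> 0 \<and> normal_cone P (max_face P (v i)) \<subseteq> cone hull {v i}"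
    and inj: "inj_on (\<lambda>i. cone hull {v i}) I"
  shows "card {i\<in>I. x \<in> max_face P (v i)} \<le> CARD('d)"
proof -
  let ?K = "{i\<in>I. x \<in> max_face P (v i)}"
  have "finite S" "card S \<le> CARD('d)" "0 \<notin> S"
    using independent_bound[OF S(1)] dependent_zero[of S] S(1) by auto
  have "cone hull {v i} \<in> (\<lambda>s. cone hull {s}) ` S" if i: "i \<in> ?K" for i
  proof -
    have "v i \<in> convex_cone hull S"
      using mem_normal_cone_iff_subset_max_face[of "{x}" P "v i"] i \<open>x \<in> P\<close> S(2) by simp
    moreover have "S \<subseteq> normal_cone P {x}"
      using S(2) by (simp add: hull_subset)
    ultimately obtain s where "s \<in> S" "s \<in> normal_cone P (max_face P (v i))"
      using generator_in_normal_cone_max_face[OF \<open>finite S\<close>] i rays by blast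
    then have "s \<in> cone hull {v i}"
      using rays i by blast
    moreover have "s \<noteq> 0"
      using \<open>s \<in> S\<close> \<open>0 \<notin> S\<close> by blast
    ultimately have "cone hull {s} = cone hull {v i}"
      by (rule cone_hull_singleton_eq)
    then show ?thesis
      using \<open>s \<in> S\<close> by (metis image_eqI)
  qed
  then have "card ((\<lambda>i. cone hull {v i}) ` ?K) \<le> card ((\<lambda>s. cone hull {s}) ` S)"
    using \<open>finite S\<close> by (intro card_mono) auto
  moreover have "card ((\<lambda>i. cone hull {v i}) ` ?K) = card ?K"
    using inj by (intro card_image) (auto intro: inj_on_subset)
  ultimately show ?thesis
    using card_image_le[OF \<open>finite S\<close>, of "\<lambda>s. cone hull {s}"] \<open>card S \<le> CARD('d)\<close>
    by linarith
qed

lemma distinct_extreme_points_for_rays: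
  fixes P :: "(real^'d) set" and v :: "'i \<Rightarrow> real^'d"
  assumes P: "polytope P" "interior P \<noteq> {}"
    and simplicial: "\<And>x. x extreme_point_of P \<Longrightarrow>
      \<exists>S. independent S \<and> normal_cone P {x} = convex_cone hull S"
    and "finite I"
    and rays: "\<And>i. i \<in> I \<Longrightarrow>
      v i \<noteq> 0 \<and> (\<exists>G. G face_of P \<and> G \<noteq> {} \<and> cone hull {v i} = normal_cone P G)"
    and inj: "inj_on (\<lambda>i. cone hull {v i}) I"
  obtains f where "inj_on f I" "\<And>i. i \<in> I \<Longrightarrow> f i extreme_point_of P \<and> v i \<in> normal_cone P {f i}"
proof -
  have ray_faces: "\<forall>i\<in>I. v i \<noteq> 0 \<and> max_face P (v i) \<noteq> {}
      \<and> normal_cone P (max_face P (v i)) \<subseteq> cone hull {v i}"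
    using rays ray_max_face by (metis face_of_imp_subset subset_empty)
  define A where "A i = {x. x extreme_point_of P \<and> x \<in> max_face P (v i)}" for i
  have "finite {x. x extreme_point_of P}"
    using P(1) by (simp add: finite_polyhedron_extreme_points polytope_imp_polyhedron)
  then have finite_A: "\<forall>i\<in>I. finite (A i)"
    by (auto simp: A_def intro: finite_subset)
  have "hall_condition I A"
  proof (intro hall_condition_degree_bounds[where d = "CARD('d)"] ballI allI)
    fix i assume "i \<in> I"
    then show "CARD('d) \<le> card (A i)"
      using card_extreme_points_facet[OF P max_face_facet_of[OF P]] ray_faces by (simp add: A_def)
  next
    fix x
    show "card {i\<in>I. x \<in> A i} \<le> CARD('d)"
    proof (cases "x extreme_point_of P")
      case True
      then obtain S where "independent S" "normal_cone P {x} = convex_cone hull S"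
        using simplicial by blast
      with True show ?thesis
        using card_rays_through_simplicial_vertex[of S P x I v] ray_faces inj
        by (simp add: A_def extreme_point_of_def)
    qed (simp add: A_def)
  qed (use \<open>finite I\<close> finite_A in auto)
  then obtain f where "distinct_representatives f I A"
    using hall_marriage \<open>finite I\<close> finite_A by blast
  then show ?thesis
    using that by (auto simp: distinct_representatives_def A_def extreme_point_of_def
        mem_normal_cone_iff_subset_max_face)
qed

section \<open>Normal fans\<close>

lemma simplicial_normal_fan_extreme_point:
  assumes "simplicial_fan (normal_fan P)" "x extreme_point_of P"
  shows "\<exists>S. independent S \<and> normal_cone P {x} = convex_cone hull S"
proof -
  have "{x} face_of P"
    using assms(2) by (simp add: face_of_singleton)
  then have "normal_cone P {x} \<in> normal_fan P"
    unfolding normal_fan_def by blast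
  with assms(1) show ?thesis
    unfolding simplicial_fan_def by blast
qed

lemma ray_generators_normal_fan:
  assumes "ray_generators (normal_fan P) n v" "i < n"
  shows "v i \<noteq> 0 \<and> (\<exists>G. G face_of P \<and> G \<noteq> {} \<and> cone hull {v i} = normal_cone P G)"
proof -
  have "cone hull {v i} \<in> rays_of (normal_fan P)"
    using assms bij_betwE unfolding ray_generators_def by blast
  then have "cone hull {v i} \<in> normal_fan P"
    unfolding rays_of_def by blast
  then show ?thesis
    using assms unfolding ray_generators_def normal_fan_def by blast
qed

lemma facet_enum_normal_fan_extreme_points:
  fixes P :: "(real^'d) set"
  assumes "polytope P" "facet_enum (normal_fan P) r F"
  obtains h where "inj_on h {x. x extreme_point_of P}"
    "\<And>x. x extreme_point_of P \<Longrightarrow> h x < r \<and> F (h x) = normal_cone P {x}"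
proof
  let ?h = "\<lambda>x. inv_into {..<r} F (normal_cone P {x})"
  have facet: "normal_cone P {x} \<in> F ` {..<r}" if "x extreme_point_of P" for x
    using assms normal_cone_extreme_point_in_maximal_cones[OF assms(1) that]
    unfolding facet_enum_def bij_betw_def by blast
  then show "?h x < r \<and> F (?h x) = normal_cone P {x}" if "x extreme_point_of P" for x
    using inv_into_into[OF facet] f_inv_into_f[OF facet] that by simp
  show "inj_on ?h {x. x extreme_point_of P}"
  proof (rule inj_onI)
    fix x y assume x: "x \<in> {x. x extreme_point_of P}" and y: "y \<in> {x. x extreme_point_of P}"
      and "?h x = ?h y"
    then have "normal_cone P {x} = normal_cone P {y}"
      using f_inv_into_f[OF facet] by (metis mem_Collect_eq)
    then show "x = y"
      using inj_onD[OF inj_on_normal_cone_extreme_points[OF assms(1)]] x y by blast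
  qed
qed

theorem lemma3p10:
  fixes \<Delta> :: "(real^'d) set set" and v :: "nat \<Rightarrow> real^'d" and F :: "nat \<Rightarrow> (real^'d) set"
    and n r :: nat
  assumes "simplicial_fan \<Delta>" and "polytopal_fan \<Delta>"
    and "ray_generators \<Delta> n v" and "facet_enum \<Delta> r F"
  shows "\<exists>M. bipartite_matching (incidence_edges n r v F) M \<and> finite M \<and> card M = n"
proof -
  obtain P where P: "polytope P" "interior P \<noteq> {}" and \<Delta>: "\<Delta> = normal_fan P"
    using assms(2) unfolding polytopal_fan_def by blast
  have "inj_on (\<lambda>i. cone hull {v i}) {..<n}"
    using assms(3) bij_betw_imp_inj_on unfolding ray_generators_def by blast
  moreover have "\<And>x. x extreme_point_of P \<Longrightarrow>
      \<exists>S. independent S \<and> normal_cone P {x} = convex_cone hull S"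
    using assms(1) unfolding \<Delta> by (rule simplicial_normal_fan_extreme_point)
  moreover have "\<And>i. i \<in> {..<n} \<Longrightarrow>
      v i \<noteq> 0 \<and> (\<exists>G. G face_of P \<and> G \<noteq> {} \<and> cone hull {v i} = normal_cone P G)"
    using assms(3) unfolding \<Delta> by (simp add: ray_generators_normal_fan)
  ultimately obtain f where f: "inj_on f {..<n}"
    "\<And>i. i \<in> {..<n} \<Longrightarrow> f i extreme_point_of P \<and> v i \<in> normal_cone P {f i}"
    using distinct_extreme_points_for_rays[OF P _ finite_lessThan] by blast
  obtain h where h: "inj_on h {x. x extreme_point_of P}"
    "\<And>x. x extreme_point_of P \<Longrightarrow> h x < r \<and> F (h x) = normal_cone P {x}"
    using facet_enum_normal_fan_extreme_points[OF P(1)] assms(4) unfolding \<Delta> by blast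
  have "inj_on (h \<circ> f) {..<n}"
    using f h by (intro comp_inj_on inj_on_subset[OF h(1)]) auto
  moreover have "\<forall>i\<in>{..<n}. (i, (h \<circ> f) i) \<in> incidence_edges n r v F"
    using f(2) h(2) by (simp add: incidence_edges_def)
  ultimately show ?thesis
    using bipartite_matching_graph_of_inj[of "h \<circ> f" "{..<n}"] by auto
qed

end
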